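(* Let $n,m,q,L\ge1$, $c>0$, and let $X\in\mathbb{R}^{n\times L}$, $U\in\mathbb{R}^{m\times L}$, $V\in\mathbb{R}^{q\times L}$, $E\in\mathbb{R}^{n\times q}$, $\mathcal{D}_{11}\in\mathbb{R}^{L\times L}$ be given. Define $N_c=\begin{bmatrix}I_n & X\mathcal{D}_{11}-EV\\ 0&-X\\0&-U\end{bmatrix}\begin{bmatrix}cI_n&0\\0&-I_L\end{bmatrix}\begin{bmatrix}I_n & X\mathcal{D}_{11}-EV\\ 0&-X\\0&-U\end{bmatrix}^{T}$ and the set $\Sigma=\{(A,B)\in\mathbb{R}^{n\times n}\times\mathbb{R}^{n\times m}: \begin{bmatrix}I_n&A&B\end{bmatrix}N_c\begin{bmatrix}I_n&A&B\end{bmatrix}^{T}\ge0\}$ (equivalently, $W:=X\mathcal{D}_{11}-AX-BU-EV$ satisfies $WW^T\le cI_n$). Suppose the true system matrices $(\bar A,\bar B)$ satisfy $\begin{bmatrix}I_n&\bar A&\bar B\end{bmatrix}N_c\begin{bmatrix}I_n&\bar A&\bar B\end{bmatrix}^{T}>0$. Then the data $(X,U)$ are informative for quadratic stabilization if and only if there exist $\alpha\ge0$, $\beta>0$, $P=P^T>0$ in $\mathbb{R}^{n\times n}$ and $\mathcal{J}\in\mathbb{R}^{m\times n}$ such that $\begin{bmatrix}-\beta I_n&-P&-\mathcal{J}^{T}\\-P&0&0\\-\mathcal{J}&0&0\end{bmatrix}-\alpha N_c\ge0.$ Moreover, if $P,\mathcal{J}$ satisfy this inequality, then $K=\mathcal{J}P^{-1}$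 is a quadratically stabilizing gain, i.e. $(A+BK)^TP^{-1}+P^{-1}(A+BK)<0$ for all $(A,B)\in\Sigma$.
   Context: The data come from an agent $\dot x=\bar Ax+\bar Bu+Ev$ with unknown $(\bar A,\bar B)$: $X,U,V$ are the first $L$ coefficients of $x,u,v$ in a Chebyshev orthogonal polynomial basis, $\mathcal{D}_{11}$ is the leading $L\times L$ block of the basis differentiation matrix, and the truncation error enters as an unknown noise $W$ with $X\mathcal{D}_{11}=\bar AX+\bar BU+EV+W$ and $WW^T\le cI_n$, so $(\bar A,\bar B)\in\Sigma$. The data $(X,U)$ are informative for quadratic stabilization if there exist $K\in\mathbb{R}^{m\times n}$ and $Q=Q^T>0$ such that $(A+BK)^TQ+Q(A+BK)<0$ for all $(A,B)\in\Sigma$. Matrix inequalities refer to symmetric matrices in the Loewner order. *)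

theory Defs
  imports "HOL-Analysis.Analysis"
begin

definition hblock :: "real^'b^'a \<Rightarrow> real^'c^'a \<Rightarrow> real^('b + 'c)^'a" where
  "hblock M1 M2 = (\<chi> i j. case j of Inl b \<Rightarrow> M1 $ i $ b | Inr c \<Rightarrow> M2 $ i $ c)"

definition vblock :: "real^'c^'a \<Rightarrow> real^'c^'b \<Rightarrow> real^'c^('a + 'b)" where
  "vblock M1 M2 = (\<chi> i. case i of Inl a \<Rightarrow> M1 $ a | Inr b \<Rightarrow> M2 $ b)"

definition psd :: "real^'n^'n \<Rightarrow> bool" where
  "psd M \<longleftrightarrow> (\<forall>x. 0 \<le> x \<bullet> (M *v x))"

definition pd :: "real^'n^'n \<Rightarrow> bool" where
  "pd M \<longleftrightarrow> (\<forall>x. x \<noteq> 0 \<longrightarrow> 0 < x \<bullet> (M *v x))"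

definition nd :: "real^'n^'n \<Rightarrow> bool" where
  "nd M \<longleftrightarrow> pd (- M)"

definition Nc :: "real \<Rightarrow> real^'l^'n \<Rightarrow> real^'l^'m \<Rightarrow> real^'l^'q \<Rightarrow> real^'q^'n \<Rightarrow> real^'l^'l
    \<Rightarrow> real^('n + ('n + 'm))^('n + ('n + 'm))" where
  "Nc c X U V E D11 =
    (let F = vblock (hblock (mat 1) (X ** D11 - E ** V))
                    (vblock (hblock 0 (- X)) (hblock 0 (- U)));
         M = vblock (hblock (c *\<^sub>R (mat 1 :: real^'n^'n)) 0) (hblock 0 (- (mat 1 :: real^'l^'l)))
     in F ** M ** transpose F)"

definition rowIAB :: "real^'n^'n \<Rightarrow> real^'m^'n \<Rightarrow> real^('n + ('n + 'm))^'n" where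
  "rowIAB A B = hblock (mat 1) (hblock A B)"

definition Sigma_set :: "real \<Rightarrow> real^'l^'n \<Rightarrow> real^'l^'m \<Rightarrow> real^'l^'q \<Rightarrow> real^'q^'n \<Rightarrow> real^'l^'l
    \<Rightarrow> ((real^'n^'n) \<times> (real^'m^'n)) set" where
  "Sigma_set c X U V E D11 =
    {(A, B). psd (rowIAB A B ** Nc c X U V E D11 ** transpose (rowIAB A B))}"

definition informative_qs :: "((real^'n^'n) \<times> (real^'m^'n)) set \<Rightarrow> bool" where
  "informative_qs S \<longleftrightarrow>
    (\<exists>(K :: real^'n^'m) (Q :: real^'n^'n). transpose Q = Q \<and> pd Q \<and>
       (\<forall>(A, B) \<in> S. nd (transpose (A + B ** K) ** Q + Q ** (A + B ** K))))"

definition LMI :: "real \<Rightarrow> real \<Rightarrow> real^'n^'n \<Rightarrow> real^'n^'m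
    \<Rightarrow> real^('n + ('n + 'm))^('n + ('n + 'm)) \<Rightarrow> real^('n + ('n + 'm))^('n + ('n + 'm))" where
  "LMI \<alpha> \<beta> P J N =
     vblock (hblock (- (\<beta> *\<^sub>R mat 1)) (hblock (- P) (- transpose J)))
            (vblock (hblock (- P) (hblock 0 0))
                    (hblock (- J) (hblock 0 0)))
     - \<alpha> *\<^sub>R N"

end

theory Submission
  imports Defs
begin

text \<open>Write \<open>G = [A B]\<close>, \<open>Z = [X; U]\<close>, \<open>R = X D\<^sub>1\<^sub>1 - E V\<close> and \<open>Y = [P; J]\<close> with
  \<open>P = Q\<^sup>-\<^sup>1\<close>, \<open>J = K P\<close>.  Then \<open>\<Sigma>\<close> is the set of \<open>G\<close> with \<open>(R - G Z)(R - G Z)\<^sup>T \<le> c I\<close>, and \<open>K\<close>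
  stabilizes with Lyapunov matrix \<open>Q\<close> iff \<open>u\<^sup>T G Y u < 0\<close> for all \<open>G \<in> \<Sigma>\<close> and \<open>u \<noteq> 0\<close>.  On a
  vector \<open>[x; v]\<close> the LMI reads \<open>2 v\<^sup>T Y x + \<alpha> m(x, v) \<le> -\<beta> |x|\<^sup>2\<close>, where
  \<open>m(x, v) = c |x|\<^sup>2 - |R\<^sup>T x - Z\<^sup>T v|\<^sup>2\<close> is the quadratic form of \<open>N\<^sub>c\<close>; taking \<open>v = G\<^sup>T x\<close> gives
  sufficiency.  Conversely, robust stability forces \<open>v\<^sup>T Y x = 0\<close> whenever \<open>Z\<^sup>T v = 0\<close>
  (perturb \<open>G\<close> by \<open>x v\<^sup>T\<close>), and \<open>v\<^sup>T Y x < 0\<close> whenever \<open>x \<noteq> 0\<close> and \<open>m(x, v) \<ge> 0\<close>: using the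
  Slater point \<open>[Abar Bbar]\<close> one completes \<open>v\<close> to some \<open>G \<in> \<Sigma>\<close> with \<open>Z\<^sup>T G\<^sup>T x = Z\<^sup>T v\<close>.  Modulo
  the common null directions this is a strict implication between two quadratic forms, so the
  S-lemma (Yakubovich's connectedness argument) provides the multipliers; the Slater point
  excludes the degenerate multiplier that puts all weight on \<open>N\<^sub>c\<close>.\<close>

definition vec_left :: "real^('a::finite + 'b::finite) \<Rightarrow> real^'a" where
  "vec_left w = (\<chi> i. w $ Inl i)"

definition vec_right :: "real^('a::finite + 'b::finite) \<Rightarrow> real^'b" where
  "vec_right w = (\<chi> i. w $ Inr i)"

definition vec_join :: "real^'a::finite \<Rightarrow> real^'b::finite \<Rightarrow> real^('a + 'b)" where
  "vec_join x y = (\<chi> i. case i of Inl j \<Rightarrow> x $ j | Inr j \<Rightarrow> y $ j)"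

lemma vec_left_join [simp]: "vec_left (vec_join x y) = x"
  by (simp add: vec_left_def vec_join_def)

lemma vec_right_join [simp]: "vec_right (vec_join x y) = y"
  by (simp add: vec_right_def vec_join_def)

lemma vec_join_left_right [simp]: "vec_join (vec_left w) (vec_right w) = w"
  by (simp add: vec_eq_iff vec_left_def vec_right_def vec_join_def split: sum.split)

lemma psd_iff_vec_join: "psd M \<longleftrightarrow> (\<forall>x y. 0 \<le> vec_join x y \<bullet> (M *v vec_join x y))"
  unfolding psd_def by (metis vec_join_left_right)

lemma vec_left_add [simp]: "vec_left (v + w) = vec_left v + vec_left w"
  and vec_right_add [simp]: "vec_right (v + w) = vec_right v + vec_right w"
  and vec_left_scaleR [simp]: "vec_left (r *\<^sub>R w) = r *\<^sub>R vec_left w"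
  and vec_right_scaleR [simp]: "vec_right (r *\<^sub>R w) = r *\<^sub>R vec_right w"
  and vec_left_zero [simp]: "vec_left 0 = 0"
  and vec_right_zero [simp]: "vec_right 0 = 0"
  by (simp_all add: vec_eq_iff vec_left_def vec_right_def)

lemma sum_UNIV_Plus:
  fixes f :: "'a::finite + 'b::finite \<Rightarrow> 'c::comm_monoid_add"
  shows "(\<Sum>i\<in>UNIV. f i) = (\<Sum>i\<in>UNIV. f (Inl i)) + (\<Sum>i\<in>UNIV. f (Inr i))"
  by (subst UNIV_Plus_UNIV [symmetric], subst sum.Plus) (simp_all add: comp_def)

lemma inner_vec_split: "v \<bullet> w = vec_left v \<bullet> vec_left w + vec_right v \<bullet> vec_right w"
  by (simp add: inner_vec_def sum_UNIV_Plus vec_left_def vec_right_def)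

lemma inner_vec_join_right [simp]: "w \<bullet> vec_join x y = vec_left w \<bullet> x + vec_right w \<bullet> y"
  by (simp add: inner_vec_split)

lemma inner_vec_join_left [simp]: "vec_join x y \<bullet> w = x \<bullet> vec_left w + y \<bullet> vec_right w"
  by (simp add: inner_vec_split)

lemma vblock_matrix_vector_mult [simp]: "vblock M1 M2 *v x = vec_join (M1 *v x) (M2 *v x)"
  by (simp add: vec_eq_iff vblock_def vec_join_def matrix_vector_mult_def split: sum.split)

lemma hblock_matrix_vector_mult [simp]:
  "hblock M1 M2 *v w = M1 *v vec_left w + M2 *v vec_right w"
  by (simp add: vec_eq_iff hblock_def matrix_vector_mult_def sum_UNIV_Plus vec_left_def vec_right_def)

lemma vector_matrix_mult_vblock [simp]:
  "w v* vblock M1 M2 = vec_left w v* M1 + vec_right w v* M2"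
  by (simp add: vec_eq_iff vblock_def vector_matrix_mult_def sum_UNIV_Plus vec_left_def vec_right_def)

lemma vector_matrix_mult_hblock [simp]: "x v* hblock M1 M2 = vec_join (x v* M1) (x v* M2)"
  by (simp add: vec_eq_iff hblock_def vec_join_def vector_matrix_mult_def split: sum.split)

lemma hblock_mult_vblock: "hblock A B ** vblock X U = A ** X + B ** U"
  by (simp add: vec_eq_iff hblock_def vblock_def matrix_matrix_mult_def sum_UNIV_Plus)

lemma hblock_cases:
  fixes G :: "real^('a::finite + 'b::finite)^'n"
  obtains A B where "G = hblock A B"
proof
  show "G = hblock (\<chi> i j. G $ i $ Inl j) (\<chi> i j. G $ i $ Inr j)"
    by (simp add: vec_eq_iff hblock_def split: sum.split)
qed

lemma all_hblock: "(\<forall>G. Q G) \<longleftrightarrow> (\<forall>A B. Q (hblock A B))"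
  by (metis hblock_cases)

lemma matrix_vector_mult_uminus [simp]: "(- M) *v x = - (M *v (x :: real^'n))"
  by (simp add: vec_eq_iff matrix_vector_mult_def sum_negf)

lemma vector_matrix_mult_uminus [simp]: "(x :: real^'m) v* (- M) = - (x v* M)"
  by (simp add: vec_eq_iff vector_matrix_mult_def sum_negf)

lemma matrix_add_rdistrib: "(A + B) ** C = A ** C + B ** C"
  by (simp add: vec_eq_iff matrix_matrix_mult_def distrib_right sum.distrib)

lemma inner_congruence:
  fixes F :: "real^'k^'n"
  shows "w \<bullet> ((F ** M ** transpose F) *v w) = (w v* F) \<bullet> (M *v (w v* F))"
  by (simp add: matrix_vector_mul_assoc [symmetric] dot_lmul_matrix)

text \<open>Vectors act on matrices from the left
  (\<open>u v* W = W\<^sup>T u\<close>), so \<open>noise_bounded c W\<close> is \<open>W W\<^sup>T \<le> c I\<close> and \<open>noise_margin c R Z x v\<close> is the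
  value of the \<open>N\<^sub>c\<close>-form at \<open>[x; v]\<close>.\<close>

definition noise_bounded :: "real \<Rightarrow> real^'l^'n \<Rightarrow> bool" where
  "noise_bounded c W \<longleftrightarrow> (\<forall>u. (norm (u v* W))\<^sup>2 \<le> c * (u \<bullet> u))"

definition noise_margin :: "real \<Rightarrow> real^'l^'n \<Rightarrow> real^'l^'k \<Rightarrow> real^'n \<Rightarrow> real^'k \<Rightarrow> real" where
  "noise_margin c R Z x v = c * (x \<bullet> x) - (norm (x v* R - v v* Z))\<^sup>2"

lemma noise_margin_vector_matrix:
  "noise_margin c R Z u (u v* G) = c * (u \<bullet> u) - (norm (u v* (R - G ** Z)))\<^sup>2"
  by (simp add: noise_margin_def vector_matrix_mul_assoc vector_matrix_mult_diff_rdistrib)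

lemma noise_bounded_iff_margin:
  "noise_bounded c (R - G ** Z) \<longleftrightarrow> (\<forall>u. 0 \<le> noise_margin c R Z u (u v* G))"
  by (simp add: noise_bounded_def noise_margin_vector_matrix)

lemma Nc_quadratic_form:
  "w \<bullet> (Nc c X U V E D11 *v w)
     = noise_margin c (X ** D11 - E ** V) (vblock X U) (vec_left w) (vec_right w)"
  unfolding Nc_def Let_def inner_congruence
  by (simp add: noise_margin_def power2_norm_eq_inner scaleR_matrix_vector_assoc [symmetric]
      algebra_simps inner_commute)

lemma rowIAB_Nc_quadratic_form:
  "u \<bullet> ((rowIAB A B ** Nc c X U V E D11 ** transpose (rowIAB A B)) *v u)
     = noise_margin c (X ** D11 - E ** V) (vblock X U) u (u v* hblock A B)"
  by (simp add: inner_congruence rowIAB_def Nc_quadratic_form [unfolded inner_congruence])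

lemma Sigma_set_eq:
  "Sigma_set c X U V E D11
     = {(A, B). noise_bounded c (X ** D11 - E ** V - hblock A B ** vblock X U)}"
  by (simp add: Sigma_set_def psd_def rowIAB_Nc_quadratic_form noise_bounded_iff_margin)

definition stacked_lmi :: "real \<Rightarrow> real \<Rightarrow> real \<Rightarrow> real^'l^'n \<Rightarrow> real^'l^'k \<Rightarrow> real^'n^'k \<Rightarrow> bool" where
  "stacked_lmi \<alpha> \<beta> c R Z Y \<longleftrightarrow>
     (\<forall>x v. 2 * (v \<bullet> (Y *v x)) + \<alpha> * noise_margin c R Z x v \<le> - \<beta> * (x \<bullet> x))"

definition robust_dual_lyapunov :: "real \<Rightarrow> real^'l^'n \<Rightarrow> real^'l^'k \<Rightarrow> real^'n^'k \<Rightarrow> bool" where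
  "robust_dual_lyapunov c R Z Y \<longleftrightarrow>
     (\<forall>G u. noise_bounded c (R - G ** Z) \<longrightarrow> u \<noteq> 0 \<longrightarrow> u \<bullet> ((G ** Y) *v u) < 0)"

lemma LMI_quadratic_form:
  fixes P :: "real^'n^'n" and J :: "real^'n^'m"
  assumes "transpose P = P"
  shows "vec_join x v \<bullet> (LMI \<alpha> \<beta> P J N *v vec_join x v)
    = - \<beta> * (x \<bullet> x) - 2 * (v \<bullet> (vblock P J *v x)) - \<alpha> * (vec_join x v \<bullet> (N *v vec_join x v))"
proof -
  have P: "x \<bullet> (P *v y) = y \<bullet> (P *v x)" for x y
    by (metis assms dot_lmul_matrix inner_commute transpose_matrix_vector)
  have J: "x \<bullet> (z v* J) = z \<bullet> (J *v x)" for x z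
    by (metis dot_lmul_matrix inner_commute)
  show ?thesis
    by (simp add: LMI_def inner_vec_split [of v] scaleR_matrix_vector_assoc [symmetric] P J algebra_simps)
qed

lemma psd_LMI_iff_stacked_lmi:
  fixes P :: "real^'n^'n" and J :: "real^'n^'m"
  assumes "transpose P = P"
  shows "psd (LMI \<alpha> \<beta> P J (Nc c X U V E D11))
    \<longleftrightarrow> stacked_lmi \<alpha> \<beta> c (X ** D11 - E ** V) (vblock X U) (vblock P J)"
  unfolding psd_iff_vec_join stacked_lmi_def LMI_quadratic_form [OF assms] Nc_quadratic_form
  by (simp add: algebra_simps)

lemma pd_invertible:
  assumes "pd P"
  shows "invertible P"
proof -
  have "P *v x = 0 \<Longrightarrow> x = 0" for x
    using assms by (metis inner_zero_right less_irrefl pd_def)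
  then show ?thesis
    by (meson invertible_left_inverse matrix_left_invertible_ker)
qed

lemma invertible_matrix_inv:
  assumes "invertible P"
  shows "P ** matrix_inv P = mat 1" and "matrix_inv P ** P = mat 1"
  using someI_ex [OF assms [unfolded invertible_def]] by (simp_all add: matrix_inv_def)

lemma matrix_inv_symmetric_pd:
  fixes P :: "real^'n^'n"
  assumes "transpose P = P" and "pd P"
  shows "transpose (matrix_inv P) = matrix_inv P" and "pd (matrix_inv P)"
proof -
  let ?Q = "matrix_inv P"
  note inv = invertible_matrix_inv [OF pd_invertible [OF assms(2)]]
  have "transpose ?Q = transpose ?Q ** (P ** ?Q)"
    by (simp add: inv)
  also have "\<dots> = transpose (P ** ?Q) ** ?Q"
    by (simp add: matrix_mul_assoc matrix_transpose_mul assms(1))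
  finally show "transpose ?Q = ?Q"
    by (simp add: inv)
  have "0 < u \<bullet> (?Q *v u)" if "u \<noteq> 0" for u
  proof -
    have "P *v (?Q *v u) = u"
      by (simp add: matrix_vector_mul_assoc inv)
    with that assms(2) have "0 < (?Q *v u) \<bullet> u"
      unfolding pd_def by (metis matrix_vector_mult_0_right)
    then show ?thesis
      by (simp add: inner_commute)
  qed
  then show "pd ?Q"
    by (simp add: pd_def)
qed

lemma nd_lyapunov_iff_dual:
  fixes M P Q :: "real^'n^'n"
  assumes Q: "transpose Q = Q" and PQ: "P ** Q = mat 1" and QP: "Q ** P = mat 1"
  shows "nd (transpose M ** Q + Q ** M) \<longleftrightarrow> (\<forall>u. u \<noteq> 0 \<longrightarrow> u \<bullet> ((M ** P) *v u) < 0)"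
proof -
  have form: "x \<bullet> ((transpose M ** Q + Q ** M) *v x) = 2 * ((Q *v x) \<bullet> ((M ** P) *v (Q *v x)))"
    for x
  proof -
    have "x \<bullet> (transpose M *v (Q *v x)) = (Q *v x) \<bullet> (M *v x)"
      by (metis dot_lmul_matrix inner_commute transpose_matrix_vector)
    moreover have "x \<bullet> (Q *v (M *v x)) = (Q *v x) \<bullet> (M *v x)"
      by (metis Q dot_lmul_matrix transpose_matrix_vector)
    moreover have "(M ** P) *v (Q *v x) = M *v x"
      by (simp add: matrix_vector_mul_assoc matrix_mul_assoc [symmetric] PQ)
    ultimately show ?thesis
      by (simp add: matrix_vector_mult_add_rdistrib matrix_vector_mul_assoc [symmetric]
          inner_add_right del: transpose_matrix_vector)
  qed
  have bij: "x = Q *v (P *v x)" "x = P *v (Q *v x)" for x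
    by (simp_all add: matrix_vector_mul_assoc PQ QP)
  show ?thesis
    unfolding nd_def pd_def matrix_vector_mult_uminus inner_minus_right form neg_0_less_iff_less
    by (metis bij mult_less_0_iff matrix_vector_mult_0_right zero_less_numeral not_numeral_less_zero)
qed

lemma Sigma_set_stabilized_iff:
  fixes P Q :: "real^'n^'n" and K :: "real^'n^'m" and X :: "real^'l^'n" and U :: "real^'l^'m"
  assumes "transpose Q = Q" and "P ** Q = mat 1" and "Q ** P = mat 1"
  shows "(\<forall>(A, B) \<in> Sigma_set c X U V E D11. nd (transpose (A + B ** K) ** Q + Q ** (A + B ** K)))
    \<longleftrightarrow> robust_dual_lyapunov c (X ** D11 - E ** V) (vblock X U) (vblock P (K ** P))"
proof -
  have "(A + B ** K) ** P = hblock A B ** vblock P (K ** P)" for A :: "real^'n^'n" and B :: "real^'m^'n"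
    by (simp add: hblock_mult_vblock matrix_add_rdistrib matrix_mul_assoc)
  then show ?thesis
    unfolding nd_lyapunov_iff_dual [OF assms] Sigma_set_eq robust_dual_lyapunov_def
    by (subst all_hblock) simp
qed

lemma stacked_lmi_imp_robust_dual_lyapunov:
  fixes R :: "real^'l^'n" and Z :: "real^'l^'k" and Y :: "real^'n^'k"
  assumes "0 \<le> \<alpha>" and "0 < \<beta>" and lmi: "stacked_lmi \<alpha> \<beta> c R Z Y"
  shows "robust_dual_lyapunov c R Z Y"
  unfolding robust_dual_lyapunov_def
proof (intro allI impI)
  fix G :: "real^'k^'n" and u :: "real^'n"
  assume "noise_bounded c (R - G ** Z)" and "u \<noteq> 0"
  then have "0 \<le> \<alpha> * noise_margin c R Z u (u v* G)" and "0 < \<beta> * (u \<bullet> u)"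
    using assms(1,2) by (simp_all add: noise_bounded_iff_margin)
  moreover have "2 * ((u v* G) \<bullet> (Y *v u)) + \<alpha> * noise_margin c R Z u (u v* G) \<le> - \<beta> * (u \<bullet> u)"
    using lmi by (simp add: stacked_lmi_def)
  ultimately show "u \<bullet> ((G ** Y) *v u) < 0"
    by (simp add: dot_lmul_matrix matrix_vector_mul_assoc [symmetric])
qed

section \<open>The S-lemma\<close>

lemma continuous_on_matrix_vector_mult [continuous_intros]:
  "continuous_on S f \<Longrightarrow> continuous_on S (\<lambda>x. (M :: real^'n^'m) *v f x)"
  by (rule bounded_linear.continuous_on [OF matrix_vector_mul_bounded_linear])

lemma inner_pencil:
  "z \<bullet> (((1 - t) *\<^sub>R F + t *\<^sub>R G) *v z) = (1 - t) * (z \<bullet> (F *v z)) + t * (z \<bullet> ((G :: real^'n^'n) *v z))"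
  by (simp add: matrix_vector_mult_add_rdistrib scaleR_matrix_vector_assoc [symmetric] inner_add_right)

lemma quadratic_form_scaleR:
  "(r *\<^sub>R z) \<bullet> (M *v (r *\<^sub>R z)) = r\<^sup>2 * (z \<bullet> ((M :: real^'n^'n) *v z))"
  by (simp add: matrix_vector_mult_scaleR power2_eq_square)

text \<open>If \<open>s\<^sub>1 > 0 > s\<^sub>2\<close> are the roots of the first polynomial, then
  \<open>s\<^sub>1 h(s\<^sub>2) - s\<^sub>2 h(s\<^sub>1) = (s\<^sub>1 - s\<^sub>2) (h\<^sub>1 - h\<^sub>2 s\<^sub>1 s\<^sub>2) \<ge> 0\<close>, so \<open>h\<close> is nonnegative at one of them.\<close>
lemma quadratic_pencil_root:
  fixes g1 kg g2 h1 kh h2 :: real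
  assumes "g1 < 0" "0 < g2" "0 \<le> h1" "0 \<le> h2"
  obtains s where "g1 + s * kg + s\<^sup>2 * g2 = 0" and "0 \<le> h1 + s * kh + s\<^sup>2 * h2"
proof -
  define D where "D = kg\<^sup>2 - 4 * g1 * g2"
  have D: "kg\<^sup>2 < D"
    using assms by (simp add: D_def mult_neg_pos)
  define r where "r = sqrt D"
  have r2: "r\<^sup>2 = D"
    using D by (simp add: r_def) (meson le_less_trans less_imp_le zero_le_power2)
  have r: "\<bar>kg\<bar> < r"
    using real_sqrt_less_mono [OF D] by (simp add: r_def)
  define s1 where "s1 = (- kg + r) / (2 * g2)"
  define s2 where "s2 = (- kg - r) / (2 * g2)"
  have "0 < s1" "s2 < 0"
    using r assms by (auto simp: s1_def s2_def divide_neg_pos)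
  have g: "g1 + s * kg + s\<^sup>2 * g2 = ((2 * g2 * s + kg)\<^sup>2 - D) / (4 * g2)" for s
    using assms unfolding D_def by (simp add: field_simps power2_eq_square)
  have "2 * g2 * s1 + kg = r" "2 * g2 * s2 + kg = - r"
    using assms by (simp_all add: s1_def s2_def)
  then have root1: "g1 + s1 * kg + s1\<^sup>2 * g2 = 0" and root2: "g1 + s2 * kg + s2\<^sup>2 * g2 = 0"
    using r2 by (simp_all add: g)
  have "s1 * (h1 + s2 * kh + s2\<^sup>2 * h2) - s2 * (h1 + s1 * kh + s1\<^sup>2 * h2)
      = (s1 - s2) * (h1 - h2 * s1 * s2)"
    by (simp add: algebra_simps power2_eq_square)
  moreover have "h2 * s1 * s2 \<le> 0"
    using \<open>0 < s1\<close> \<open>s2 < 0\<close> assms(4) by (simp add: mult_nonneg_nonpos)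
  then have "0 \<le> (s1 - s2) * (h1 - h2 * s1 * s2)"
    using \<open>0 < s1\<close> \<open>s2 < 0\<close> assms(3) by simp
  ultimately have "0 \<le> h1 + s1 * kh + s1\<^sup>2 * h2 \<or> 0 \<le> h1 + s2 * kh + s2\<^sup>2 * h2"
    using \<open>0 < s1\<close> \<open>s2 < 0\<close> by (smt (verit) mult_pos_neg mult_neg_neg)
  then show ?thesis
    using root1 root2 that by blast
qed

lemma quadratic_forms_common_point:
  fixes G H :: "real^'k^'k"
  assumes "z1 \<bullet> (G *v z1) < 0" "0 < z2 \<bullet> (G *v z2)" "0 \<le> z1 \<bullet> (H *v z1)" "0 \<le> z2 \<bullet> (H *v z2)"
  obtains s where "z1 + s *\<^sub>R z2 \<noteq> 0"
    and "(z1 + s *\<^sub>R z2) \<bullet> (G *v (z1 + s *\<^sub>R z2)) = 0"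
    and "0 \<le> (z1 + s *\<^sub>R z2) \<bullet> (H *v (z1 + s *\<^sub>R z2))"
proof -
  have expand: "(z1 + s *\<^sub>R z2) \<bullet> (M *v (z1 + s *\<^sub>R z2))
      = z1 \<bullet> (M *v z1) + s * (z1 \<bullet> (M *v z2) + z2 \<bullet> (M *v z1)) + s\<^sup>2 * (z2 \<bullet> (M *v z2))"
    for M :: "real^'k^'k" and s
    by (simp add: algebra_simps power2_eq_square)
  obtain s where G: "(z1 + s *\<^sub>R z2) \<bullet> (G *v (z1 + s *\<^sub>R z2)) = 0"
    and H: "0 \<le> (z1 + s *\<^sub>R z2) \<bullet> (H *v (z1 + s *\<^sub>R z2))"
    using quadratic_pencil_root [OF assms] unfolding expand by blast
  moreover have "z1 + s *\<^sub>R z2 \<noteq> 0"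
  proof
    assume "z1 + s *\<^sub>R z2 = 0"
    then have "z1 = (- s) *\<^sub>R z2"
      by (simp add: eq_neg_iff_add_eq_0 add.commute)
    then have "z1 \<bullet> (G *v z1) = s\<^sup>2 * (z2 \<bullet> (G *v z2))"
      by (simp only: quadratic_form_scaleR power2_minus)
    with assms(1,2) show False
      by (smt (verit) mult_nonneg_nonneg zero_le_power2)
  qed
  ultimately show ?thesis
    using that by blast
qed

lemma quadratic_form_uniform_bound:
  fixes M :: "real^'k^'k"
  assumes S: "subspace S" and neg: "\<And>z. z \<in> S \<Longrightarrow> norm z = 1 \<Longrightarrow> z \<bullet> (M *v z) < 0"
  obtains \<beta> where "0 < \<beta>" and "\<And>z. z \<in> S \<Longrightarrow> z \<bullet> (M *v z) \<le> - \<beta> * (z \<bullet> z)"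
proof -
  define K where "K = S \<inter> sphere 0 1"
  have "compact K"
    unfolding K_def by (metis S closed_subspace compact_Int_closed compact_sphere inf_commute)
  have normalize: "(1 / norm z) *\<^sub>R z \<in> K" if "z \<in> S" "z \<noteq> 0" for z
    using that S by (simp add: K_def subspace_scale)
  obtain \<beta> where "0 < \<beta>" and \<beta>: "\<And>z. z \<in> K \<Longrightarrow> z \<bullet> (M *v z) \<le> - \<beta>"
  proof (cases "K = {}")
    case False
    have "continuous_on K (\<lambda>z. z \<bullet> (M *v z))"
      by (intro continuous_intros)
    then obtain z0 where "z0 \<in> K" and "\<And>z. z \<in> K \<Longrightarrow> z \<bullet> (M *v z) \<le> z0 \<bullet> (M *v z0)"
      using continuous_attains_sup [OF \<open>compact K\<close> False] by blast
    moreover have "z0 \<bullet> (M *v z0) < 0"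
      using neg \<open>z0 \<in> K\<close> by (simp add: K_def)
    ultimately show ?thesis
      using that [of "- (z0 \<bullet> (M *v z0))"] by simp
  qed (use that [of 1] in simp)
  have "z \<bullet> (M *v z) \<le> - \<beta> * (z \<bullet> z)" if "z \<in> S" for z
  proof (cases "z = 0")
    case False
    have "z = norm z *\<^sub>R ((1 / norm z) *\<^sub>R z)"
      using False by simp
    then have "z \<bullet> (M *v z) = (norm z)\<^sup>2 * (((1 / norm z) *\<^sub>R z) \<bullet> (M *v ((1 / norm z) *\<^sub>R z)))"
      by (metis quadratic_form_scaleR)
    also have "\<dots> \<le> (norm z)\<^sup>2 * - \<beta>"
      by (rule mult_left_mono [OF \<beta> [OF normalize [OF that False]] zero_le_power2])
    finally show ?thesis
      by (simp add: power2_norm_eq_inner mult.commute)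
  qed simp
  with \<open>0 < \<beta>\<close> show ?thesis
    using that by blast
qed

lemma unit_interval_not_covered:
  fixes A B :: "real set"
  assumes "closed A" and "closed B" and "A \<inter> B \<inter> {0..1} = {}" and "1 \<notin> A" and "0 \<notin> B"
  obtains t where "0 \<le> t" and "t \<le> 1" and "t \<notin> A" and "t \<notin> B"
proof -
  have "\<not> {0..1} \<subseteq> A \<union> B"
  proof
    assume cover: "{0..1} \<subseteq> A \<union> B"
    then have "0 \<in> A \<inter> {0..1}" and "1 \<in> B \<inter> {0..1}"
      using subsetD [OF cover, of 0] subsetD [OF cover, of 1] assms(4,5) by auto
    moreover have "(A \<inter> {0..1}) \<union> (B \<inter> {0..1}) = {0..1}" and "(A \<inter> {0..1}) \<inter> (B \<inter> {0..1}) = {}"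
      using cover assms(3) by blast+
    moreover have "closed (A \<inter> {0..1})" and "closed (B \<inter> {0..1})"
      using assms(1,2) by (simp_all add: closed_Int)
    ultimately show False
      using connected_closed_set [of "{0..1::real}"] by (metis closed_atLeastAtMost connected_Icc empty_iff)
  qed
  then obtain t where "t \<in> {0..1}" and "t \<notin> A \<union> B"
    by blast
  then show ?thesis
    by (intro that) auto
qed

lemma S_lemma_no_crossing:
  fixes F G :: "real^'k^'k"
  assumes S: "subspace S"
    and impl: "\<And>z. z \<in> S \<Longrightarrow> z \<noteq> 0 \<Longrightarrow> 0 \<le> z \<bullet> (G *v z) \<Longrightarrow> z \<bullet> (F *v z) < 0"
    and t: "0 \<le> t" "t \<le> 1"
    and z1: "z1 \<in> S" "z1 \<noteq> 0" "0 \<le> z1 \<bullet> (F *v z1)" "0 \<le> z1 \<bullet> (((1 - t) *\<^sub>R F + t *\<^sub>R G) *v z1)"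
    and z2: "z2 \<in> S" "z2 \<noteq> 0" "0 \<le> z2 \<bullet> (G *v z2)" "0 \<le> z2 \<bullet> (((1 - t) *\<^sub>R F + t *\<^sub>R G) *v z2)"
  shows False
proof -
  let ?H = "(1 - t) *\<^sub>R F + t *\<^sub>R G"
  have neg: "z \<bullet> (?H *v z) < 0" if "z \<in> S" "z \<noteq> 0" "z \<bullet> (G *v z) = 0" "t < 1" for z
    using impl [OF that(1,2)] that(3,4) by (simp add: inner_pencil mult_pos_neg)
  have g1: "z1 \<bullet> (G *v z1) < 0"
    using impl [OF z1(1,2)] z1(3) by fastforce
  have "t < 1"
    using z1(4) g1 t(2) by (cases "t = 1") (simp_all add: inner_pencil)
  have g2: "0 < z2 \<bullet> (G *v z2)"
    using neg [OF z2(1,2) _ \<open>t < 1\<close>] z2(3,4) by fastforce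
  obtain s where "z1 + s *\<^sub>R z2 \<noteq> 0" "(z1 + s *\<^sub>R z2) \<bullet> (G *v (z1 + s *\<^sub>R z2)) = 0"
    "0 \<le> (z1 + s *\<^sub>R z2) \<bullet> (?H *v (z1 + s *\<^sub>R z2))"
    using quadratic_forms_common_point [OF g1 g2 z1(4) z2(4)] by blast
  moreover have "z1 + s *\<^sub>R z2 \<in> S"
    using S z1(1) z2(1) by (simp add: subspace_add subspace_scale)
  ultimately show False
    using neg [of "z1 + s *\<^sub>R z2"] \<open>t < 1\<close> by fastforce
qed

text \<open>Yakubovich's argument: the pencil parameters \<open>t\<close> for which some unit vector with
  \<open>F\<close>-form \<open>\<ge> 0\<close>, resp. \<open>G\<close>-form \<open>\<ge> 0\<close>, keeps the pencil form \<open>\<ge> 0\<close> form two closed sets, which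
  do not meet in \<open>[0, 1]\<close> by the previous lemma; the first misses \<open>1\<close> and the second misses \<open>0\<close>,
  so some \<open>t\<close> lies in neither and the pencil is negative on the unit sphere of \<open>S\<close>.\<close>
lemma S_lemma_subspace:
  fixes F G :: "real^'k^'k"
  assumes S: "subspace S"
    and impl: "\<And>z. z \<in> S \<Longrightarrow> z \<noteq> 0 \<Longrightarrow> 0 \<le> z \<bullet> (G *v z) \<Longrightarrow> z \<bullet> (F *v z) < 0"
  obtains t \<beta> where "0 \<le> t" "t \<le> 1" "0 < \<beta>"
    "\<And>z. z \<in> S \<Longrightarrow> (1 - t) * (z \<bullet> (F *v z)) + t * (z \<bullet> (G *v z)) \<le> - \<beta> * (z \<bullet> z)"
proof -
  define h where "h t z = (1 - t) * (z \<bullet> (F *v z)) + t * (z \<bullet> (G *v z))" for t z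
  define K where "K = S \<inter> sphere 0 1"
  have "compact K"
    unfolding K_def by (metis S closed_subspace compact_Int_closed compact_sphere inf_commute)
  have K: "z \<in> S" "z \<noteq> 0" if "z \<in> K" for z
    using that by (auto simp: K_def)
  define Lo where "Lo = {t. \<exists>z. z \<in> K \<and> (z, t) \<in> {p. 0 \<le> fst p \<bullet> (F *v fst p) \<and> 0 \<le> h (snd p) (fst p)}}"
  define Up where "Up = {t. \<exists>z. z \<in> K \<and> (z, t) \<in> {p. 0 \<le> fst p \<bullet> (G *v fst p) \<and> 0 \<le> h (snd p) (fst p)}}"
  have "continuous_on UNIV (\<lambda>p :: (real^'k) \<times> real. fst p \<bullet> (M *v fst p))" for M
    by (intro continuous_intros)
  moreover have "continuous_on UNIV (\<lambda>p. h (snd p) (fst p))"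
    unfolding h_def by (intro continuous_intros)
  ultimately have closed: "closed {p. 0 \<le> fst p \<bullet> (M *v fst p) \<and> 0 \<le> h (snd p) (fst p)}" for M
    by (intro closed_Collect_conj closed_Collect_le continuous_on_const)
  have "closed Lo" and "closed Up"
    unfolding Lo_def Up_def using closed_compact_projection [OF \<open>compact K\<close> closed] by blast+
  moreover have "Lo \<inter> Up \<inter> {0..1} = {}"
  proof -
    have False if "t \<in> Lo" and "t \<in> Up" and t: "0 \<le> t" "t \<le> 1" for t
    proof -
      obtain z1 where "z1 \<in> K" "0 \<le> z1 \<bullet> (F *v z1)" "0 \<le> h t z1"
        using \<open>t \<in> Lo\<close> by (auto simp: Lo_def)
      moreover obtain z2 where "z2 \<in> K" "0 \<le> z2 \<bullet> (G *v z2)" "0 \<le> h t z2"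
        using \<open>t \<in> Up\<close> by (auto simp: Up_def)
      ultimately show False
        using S_lemma_no_crossing [of S G F t z1 z2, OF S impl t] K by (auto simp: h_def inner_pencil)
    qed
    then show ?thesis
      by auto
  qed
  moreover have "1 \<notin> Lo" and "0 \<notin> Up"
    unfolding Lo_def Up_def h_def using impl K by force+
  ultimately obtain t where t: "0 \<le> t" "t \<le> 1" "t \<notin> Lo" "t \<notin> Up"
    by (rule unit_interval_not_covered)
  have "h t z < 0" if "z \<in> K" for z
  proof (rule ccontr)
    assume "\<not> h t z < 0"
    then have "0 \<le> h t z"
      by simp
    moreover have "h t z < 0" if "z \<bullet> (F *v z) < 0" and "z \<bullet> (G *v z) < 0"
    proof (cases "t = 1")
      case False
      then show ?thesis
        using that t(1,2) by (simp add: h_def add_neg_nonpos mult_pos_neg mult_nonneg_nonpos)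
    qed (use that in \<open>simp add: h_def\<close>)
    ultimately have "0 \<le> z \<bullet> (F *v z) \<or> 0 \<le> z \<bullet> (G *v z)"
      by fastforce
    then show False
      using t(3,4) \<open>z \<in> K\<close> \<open>0 \<le> h t z\<close> by (auto simp: Lo_def Up_def)
  qed
  then have "z \<bullet> (((1 - t) *\<^sub>R F + t *\<^sub>R G) *v z) < 0" if "z \<in> S" and "norm z = 1" for z
    using that by (simp add: K_def h_def inner_pencil)
  then obtain \<beta> where "0 < \<beta>" "\<And>z. z \<in> S \<Longrightarrow> z \<bullet> (((1 - t) *\<^sub>R F + t *\<^sub>R G) *v z) \<le> - \<beta> * (z \<bullet> z)"
    using quadratic_form_uniform_bound [OF S] by blast
  then show ?thesis
    using that t(1,2) by (simp add: inner_pencil)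
qed

lemma orthogonal_projection_exists:
  fixes S :: "'a::euclidean_space set"
  assumes "subspace S"
  obtains p where "linear p" and "\<And>u. p u \<in> S" and "\<And>u s. s \<in> S \<Longrightarrow> (u - p u) \<bullet> s = 0"
    and "\<And>s. s \<in> S \<Longrightarrow> p s = s" and "\<And>u. (norm u)\<^sup>2 = (norm (p u))\<^sup>2 + (norm (u - p u))\<^sup>2"
proof -
  obtain B where B: "B \<subseteq> S" "pairwise orthogonal B" "span B = S"
    using orthogonal_basis_subspace [OF assms] by metis
  define p where "p u = (\<Sum>b\<in>B. (b \<bullet> u / (b \<bullet> b)) *\<^sub>R b)" for u
  have "linear p"
    unfolding linear_iff p_def
    by (simp add: inner_add_right add_divide_distrib scaleR_add_left sum.distrib scaleR_sum_right)
  moreover have range: "p u \<in> S" for u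
    unfolding p_def B(3) [symmetric] by (intro span_sum span_mul span_base)
  moreover have orth: "(u - p u) \<bullet> s = 0" if "s \<in> S" for u s
  proof -
    have "orthogonal s (u - p u)"
      unfolding p_def using Gram_Schmidt_step [OF B(2)] that B(3) by blast
    then show ?thesis
      by (simp add: orthogonal_def inner_commute)
  qed
  moreover have "p s = s" if "s \<in> S" for s
  proof -
    have "s - p s \<in> S"
      using that range assms by (simp add: subspace_diff)
    then show ?thesis
      using orth [of "s - p s" s] by simp
  qed
  moreover have "(norm u)\<^sup>2 = (norm (p u))\<^sup>2 + (norm (u - p u))\<^sup>2" for u
  proof -
    have "(u - p u) \<bullet> p u = 0"
      using orth range by blast
    then show ?thesis
      by (simp add: power2_norm_eq_inner inner_diff_left inner_diff_right inner_commute)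
  qed
  ultimately show ?thesis
    using that by blast
qed

lemma linear_vector_matrix_mult: "linear (\<lambda>v. v v* (Z :: real^'l^'k))"
  unfolding linear_iff by (simp add: vector_matrix_left_distrib scaleR_vector_matrix_assoc)

lemma factor_through_vector_matrix_mult:
  fixes d :: "real^'n \<Rightarrow> real^'l" and Z :: "real^'l^'k"
  assumes "linear d" and "\<And>u. d u \<in> range (\<lambda>v. v v* Z)"
  obtains G :: "real^'k^'n" where "\<And>u. (u v* G) v* Z = d u"
proof -
  obtain g where "linear g" and g: "\<forall>y \<in> range (\<lambda>v. v v* Z). g y v* Z = y"
    using linear_exists_right_inverse_on [OF linear_vector_matrix_mult subspace_UNIV] by blast
  have "g (d u) v* Z = d u" for u
    using g assms(2) by blast
  then have "(u v* transpose (matrix (g \<circ> d))) v* Z = d u" for u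
    using assms(1) \<open>linear g\<close> by (simp add: matrix_works linear_compose)
  then show ?thesis
    using that by blast
qed

lemma rank_one_completion_bound:
  fixes a :: "'a::real_inner \<Rightarrow> 'b::real_inner"
  assumes "linear a"
    and bound: "\<And>u. (norm (a u))\<^sup>2 \<le> c * (u \<bullet> u)"
    and x: "(norm (a x))\<^sup>2 < c * (x \<bullet> x)"
    and orth: "\<And>u. a u \<bullet> s = 0"
    and s: "(norm s)\<^sup>2 \<le> c * (x \<bullet> x) - (norm (a x))\<^sup>2"
  shows "(norm (a u + ((c * (x \<bullet> u) - a x \<bullet> a u) / (c * (x \<bullet> x) - (norm (a x))\<^sup>2)) *\<^sub>R s))\<^sup>2
    \<le> c * (u \<bullet> u)"
proof -
  define C where "C y z = c * (y \<bullet> z) - a y \<bullet> a z" for y z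
  have Cx: "0 < C x x"
    using x by (simp add: C_def power2_norm_eq_inner)
  have CS: "(C x u)\<^sup>2 \<le> C x x * C u u"
  proof -
    define \<tau> where "\<tau> = C x u / C x x"
    have "0 \<le> C (u - \<tau> *\<^sub>R x) (u - \<tau> *\<^sub>R x)"
      using bound [of "u - \<tau> *\<^sub>R x"] by (simp add: C_def power2_norm_eq_inner)
    also have "\<dots> = C u u - 2 * \<tau> * C x u + \<tau>\<^sup>2 * C x x"
      by (simp add: C_def linear_diff [OF assms(1)] linear_scale [OF assms(1)] inner_commute
          algebra_simps power2_eq_square)
    also have "\<dots> = C u u - (C x u)\<^sup>2 / C x x"
      using Cx by (simp add: \<tau>_def field_simps power2_eq_square)
    finally show ?thesis
      using Cx by (simp add: field_simps)
  qed
  define \<mu> where "\<mu> = C x u / C x x"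
  have "(norm (a u + \<mu> *\<^sub>R s))\<^sup>2 = (norm (a u))\<^sup>2 + \<mu>\<^sup>2 * (norm s)\<^sup>2"
    using orth [of u] unfolding power2_norm_eq_inner
    by (simp add: inner_add_left inner_add_right inner_commute power2_eq_square)
  also have "\<dots> \<le> (norm (a u))\<^sup>2 + \<mu>\<^sup>2 * C x x"
    using s by (simp add: C_def power2_norm_eq_inner mult_left_mono)
  also have "\<mu>\<^sup>2 * C x x = (C x u)\<^sup>2 / C x x"
    using Cx by (simp add: \<mu>_def power2_eq_square)
  also have "\<dots> \<le> C u u"
    using CS Cx by (simp add: pos_divide_le_eq mult.commute)
  finally show ?thesis
    by (simp add: C_def \<mu>_def power2_norm_eq_inner)
qed

section \<open>Necessity of the LMI\<close>

text \<open>Adding \<open>x v\<^sup>T\<close> with \<open>v\<^sup>T Z = 0\<close> to \<open>G\<close> does not change the noise \<open>R - G Z\<close>, but shifts the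
  closed-loop form at \<open>x\<close> by a multiple of \<open>v \<bullet> Y x\<close>.\<close>
lemma robust_dual_lyapunov_kernel:
  fixes R :: "real^'l^'n" and Z :: "real^'l^'k" and Y :: "real^'n^'k"
  assumes robust: "robust_dual_lyapunov c R Z Y" and G0: "noise_bounded c (R - G0 ** Z)"
    and ker: "v v* Z = 0"
  shows "v \<bullet> (Y *v x) = 0"
proof (cases "x = 0")
  case False
  define T where "T = (\<chi> i j. x $ i * v $ j)"
  have "T ** Z = (\<chi> i j. x $ i * (v v* Z) $ j)"
    by (simp add: T_def vec_eq_iff matrix_matrix_mult_def vector_matrix_mult_def
        sum_distrib_left mult.assoc)
  with ker have "T ** Z = 0"
    by (simp add: vec_eq_iff)
  then have "noise_bounded c (R - (G0 + t *\<^sub>R T) ** Z)" for t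
    using G0 by (simp add: matrix_add_rdistrib scalar_matrix_assoc [symmetric])
  then have shifted: "x \<bullet> (((G0 + t *\<^sub>R T) ** Y) *v x) < 0" for t
    using robust False by (simp add: robust_dual_lyapunov_def)
  have "T *v y = (v \<bullet> y) *\<^sub>R x" for y
    by (simp add: T_def vec_eq_iff matrix_vector_mult_def inner_vec_def sum_distrib_left mult_ac)
  then have "x \<bullet> (((G0 + t *\<^sub>R T) ** Y) *v x)
      = x \<bullet> ((G0 ** Y) *v x) + t * ((x \<bullet> x) * (v \<bullet> (Y *v x)))" for t
    by (simp add: matrix_add_rdistrib matrix_vector_mult_add_rdistrib inner_add_right
        scalar_matrix_assoc [symmetric] scaleR_matrix_vector_assoc [symmetric]
        matrix_vector_mul_assoc [symmetric])
  with shifted have neg: "x \<bullet> ((G0 ** Y) *v x) + t * ((x \<bullet> x) * (v \<bullet> (Y *v x))) < 0" for t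
    by metis
  have "(x \<bullet> x) * (v \<bullet> (Y *v x)) = 0"
  proof (rule ccontr)
    assume "(x \<bullet> x) * (v \<bullet> (Y *v x)) \<noteq> 0"
    then show False
      using neg [of "- x \<bullet> ((G0 ** Y) *v x) / ((x \<bullet> x) * (v \<bullet> (Y *v x)))"] by simp
  qed
  then show ?thesis
    using False by simp
qed simp

text \<open>Split each noise row \<open>u v* (R - G Z)\<close> along the row space \<open>S\<close> of \<open>Z\<close>: the component
  \<open>a u\<close> orthogonal to \<open>S\<close> does not depend on \<open>G\<close>, the component in \<open>S\<close> can be prescribed at will.
  Prescribing it of rank one, \<open>u \<mapsto> (C x u / C x x) s\<close> with \<open>C y z = c (y \<bullet> z) - a y \<bullet> a z\<close>
  (positive definite thanks to the Slater point \<open>G\<^sub>0\<close>), matches \<open>v\<close> at \<open>x\<close> and respects the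
  noise bound by the Cauchy-Schwarz inequality for \<open>C\<close>.\<close>
lemma noise_bounded_interpolation:
  fixes R :: "real^'l^'n" and Z :: "real^'l^'k" and G0 :: "real^'k^'n"
  assumes slater: "\<And>u. u \<noteq> 0 \<Longrightarrow> 0 < noise_margin c R Z u (u v* G0)"
    and x: "x \<noteq> 0" and feasible: "0 \<le> noise_margin c R Z x v"
  obtains G where "noise_bounded c (R - G ** Z)" and "(x v* G) v* Z = v v* Z"
proof -
  define S where "S = range (\<lambda>v :: real^'k. v v* Z)"
  have "subspace S"
    unfolding S_def by (rule linear_subspace_image [OF linear_vector_matrix_mult subspace_UNIV])
  have inS: "w v* Z \<in> S" for w
    by (simp add: S_def)
  obtain p where "linear p" and p_range: "\<And>u. p u \<in> S"
    and p_orth: "\<And>u s. s \<in> S \<Longrightarrow> (u - p u) \<bullet> s = 0" and p_fix: "\<And>s. s \<in> S \<Longrightarrow> p s = s"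
    and p_norm: "\<And>u. (norm u)\<^sup>2 = (norm (p u))\<^sup>2 + (norm (u - p u))\<^sup>2"
    using orthogonal_projection_exists [OF \<open>subspace S\<close>] by blast
  define a where "a u = u v* R - p (u v* R)" for u
  have a_eq: "a u = u v* (R - G ** Z) - p (u v* (R - G ** Z))" for u G
    using p_fix [OF inS [of "u v* G"]]
    by (simp add: a_def vector_matrix_mult_diff_rdistrib vector_matrix_mul_assoc linear_diff [OF \<open>linear p\<close>])
  have "linear a"
    unfolding linear_iff a_def
    by (simp add: vector_matrix_left_distrib scaleR_vector_matrix_assoc linear_add [OF \<open>linear p\<close>]
        linear_scale [OF \<open>linear p\<close>] scaleR_diff_right)
  have a_bound: "(norm (a u))\<^sup>2 \<le> (norm (u v* (R - G ** Z)))\<^sup>2" for u G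
    using p_norm [of "u v* (R - G ** Z)"] by (simp add: a_eq [of u G])
  have a_less: "(norm (a u))\<^sup>2 < c * (u \<bullet> u)" if "u \<noteq> 0" for u
  proof -
    have "(norm (a u))\<^sup>2 \<le> (norm (u v* (R - G0 ** Z)))\<^sup>2"
      by (rule a_bound)
    also have "\<dots> < c * (u \<bullet> u)"
      using slater [OF that] by (simp add: noise_margin_vector_matrix)
    finally show ?thesis .
  qed
  have a_le: "(norm (a u))\<^sup>2 \<le> c * (u \<bullet> u)" for u
    using a_less [of u] by (cases "u = 0") (auto simp: linear_0 [OF \<open>linear a\<close>])
  define s where "s = p (x v* R - v v* Z)"
  have "s \<in> S"
    by (simp add: s_def p_range)
  have "x v* R - v v* Z - s = a x"
    by (simp add: a_def s_def linear_diff [OF \<open>linear p\<close>] p_fix [OF inS])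
  then have s_bound: "(norm s)\<^sup>2 \<le> c * (x \<bullet> x) - (norm (a x))\<^sup>2"
    using p_norm [of "x v* R - v v* Z"] feasible by (simp add: s_def noise_margin_def)
  define d where "d u = p (u v* R) - ((c * (x \<bullet> u) - a x \<bullet> a u) / (c * (x \<bullet> x) - (norm (a x))\<^sup>2)) *\<^sub>R s"
    for u
  have "linear d"
    unfolding linear_iff d_def
    by (simp add: scaleR_vector_matrix_assoc linear_add [OF \<open>linear p\<close>] linear_scale [OF \<open>linear p\<close>]
        linear_add [OF \<open>linear a\<close>] linear_scale [OF \<open>linear a\<close>] add_divide_distrib
        diff_divide_distrib algebra_simps)
  moreover have "d u \<in> range (\<lambda>v. v v* Z)" for u
    using \<open>subspace S\<close> p_range \<open>s \<in> S\<close> unfolding d_def S_def [symmetric]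
    by (simp add: subspace_diff subspace_scale)
  ultimately obtain G where G: "\<And>u. (u v* G) v* Z = d u"
    using factor_through_vector_matrix_mult by blast
  have "noise_bounded c (R - G ** Z)"
    unfolding noise_bounded_def
  proof
    fix u
    have "u v* (R - G ** Z) = a u + ((c * (x \<bullet> u) - a x \<bullet> a u) / (c * (x \<bullet> x) - (norm (a x))\<^sup>2)) *\<^sub>R s"
      by (simp add: a_def d_def G vector_matrix_mult_diff_rdistrib vector_matrix_mul_assoc [symmetric])
    moreover have "a w \<bullet> s = 0" for w
      using p_orth [OF \<open>s \<in> S\<close>] by (simp add: a_def)
    ultimately show "(norm (u v* (R - G ** Z)))\<^sup>2 \<le> c * (u \<bullet> u)"
      using rank_one_completion_bound [OF \<open>linear a\<close> a_le a_less [OF x] _ s_bound] by simp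
  qed
  moreover have "(x v* G) v* Z = v v* Z"
    using a_less [OF x]
    by (simp add: G d_def s_def power2_norm_eq_inner linear_diff [OF \<open>linear p\<close>, symmetric] p_fix [OF inS])
  ultimately show ?thesis
    using that by blast
qed

lemma quadratic_form_cross_block:
  fixes Y :: "real^'n^'k"
  shows "w \<bullet> (vblock (hblock 0 (transpose Y)) (hblock Y 0) *v w) = 2 * (vec_right w \<bullet> (Y *v vec_left w))"
  by (simp add: inner_vec_split [of w] dot_lmul_matrix [symmetric] inner_commute)

lemma quadratic_form_noise_margin:
  fixes R :: "real^'l^'n" and Z :: "real^'l^'k"
  shows "w \<bullet> ((vblock (hblock (c *\<^sub>R mat 1) 0) 0 - vblock R (- Z) ** transpose (vblock R (- Z))) *v w)
    = noise_margin c R Z (vec_left w) (vec_right w)"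
proof -
  have "w \<bullet> ((L ** transpose L) *v w) = (w v* L) \<bullet> (w v* L)" for L :: "real^'l^('n + 'k)"
    by (simp add: matrix_vector_mul_assoc [symmetric] dot_lmul_matrix)
  then show ?thesis
    by (simp add: noise_margin_def matrix_vector_mult_diff_rdistrib inner_diff_right
        power2_norm_eq_inner scaleR_matrix_vector_assoc [symmetric])
qed

lemma slater_imp_noise_bounded:
  assumes "\<And>u. u \<noteq> 0 \<Longrightarrow> 0 < noise_margin c R Z u (u v* G0)"
  shows "noise_bounded c (R - G0 ** Z)"
  unfolding noise_bounded_iff_margin
proof
  fix u
  show "0 \<le> noise_margin c R Z u (u v* G0)"
    using assms [of u] by (cases "u = 0") (simp_all add: noise_margin_def)
qed

lemma robust_dual_lyapunov_feasible_neg: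
  fixes R :: "real^'l^'n" and Z :: "real^'l^'k" and Y :: "real^'n^'k" and G0 :: "real^'k^'n"
  assumes robust: "robust_dual_lyapunov c R Z Y"
    and slater: "\<And>u. u \<noteq> 0 \<Longrightarrow> 0 < noise_margin c R Z u (u v* G0)"
    and "x \<noteq> 0" and "0 \<le> noise_margin c R Z x v"
  shows "v \<bullet> (Y *v x) < 0"
proof -
  obtain G where G: "noise_bounded c (R - G ** Z)" and "(x v* G) v* Z = v v* Z"
    using noise_bounded_interpolation [OF slater assms(3,4)] by blast
  then have "(x v* G - v) \<bullet> (Y *v x) = 0"
    using robust_dual_lyapunov_kernel [OF robust slater_imp_noise_bounded [OF slater]]
    by (simp add: vector_matrix_mult_diff_distrib)
  moreover have "(x v* G) \<bullet> (Y *v x) < 0"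
    using robust G \<open>x \<noteq> 0\<close>
    by (simp add: robust_dual_lyapunov_def dot_lmul_matrix matrix_vector_mul_assoc [symmetric])
  ultimately show ?thesis
    by (simp add: inner_diff_left)
qed

lemma robust_dual_lyapunov_strict_on_complement:
  fixes R :: "real^'l^'n" and Z :: "real^'l^'k" and Y :: "real^'n^'k" and G0 :: "real^'k^'n"
    and w :: "real^('n + 'k)"
  assumes robust: "robust_dual_lyapunov c R Z Y"
    and slater: "\<And>u. u \<noteq> 0 \<Longrightarrow> 0 < noise_margin c R Z u (u v* G0)"
    and orth: "\<And>k. vec_left k = 0 \<Longrightarrow> vec_right k v* Z = 0 \<Longrightarrow> orthogonal k w"
    and "w \<noteq> 0" and feasible: "0 \<le> noise_margin c R Z (vec_left w) (vec_right w)"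
  shows "vec_right w \<bullet> (Y *v vec_left w) < 0"
proof (cases "vec_left w = 0")
  case True
  then have "vec_right w v* Z = 0"
    using feasible by (simp add: noise_margin_def)
  with True have "w \<bullet> w = 0"
    using orth [of w] by (simp add: orthogonal_def)
  with \<open>w \<noteq> 0\<close> show ?thesis
    by simp
next
  case False
  then show ?thesis
    using robust_dual_lyapunov_feasible_neg [OF robust slater _ feasible] by simp
qed

lemma robust_dual_lyapunov_S_procedure:
  fixes R :: "real^'l^'n" and Z :: "real^'l^'k" and Y :: "real^'n^'k" and G0 :: "real^'k^'n"
  assumes robust: "robust_dual_lyapunov c R Z Y"
    and slater: "\<And>u. u \<noteq> 0 \<Longrightarrow> 0 < noise_margin c R Z u (u v* G0)"
  obtains t \<beta> where "0 \<le> t" "t \<le> 1" "0 < \<beta>"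
    "\<And>x v. (1 - t) * (2 * (v \<bullet> (Y *v x))) + t * noise_margin c R Z x v \<le> - \<beta> * (x \<bullet> x)"
proof -
  define F :: "real^('n + 'k)^('n + 'k)" where "F = vblock (hblock 0 (transpose Y)) (hblock Y 0)"
  define G :: "real^('n + 'k)^('n + 'k)"
    where "G = vblock (hblock (c *\<^sub>R mat 1) 0) 0 - vblock R (- Z) ** transpose (vblock R (- Z))"
  note F = quadratic_form_cross_block [of _ Y, folded F_def]
  note G = quadratic_form_noise_margin [of _ c R Z, folded G_def]
  define N where "N = {w :: real^('n + 'k). vec_left w = 0 \<and> vec_right w v* Z = 0}"
  have "subspace N"
    by (auto simp: subspace_def N_def vector_matrix_left_distrib scaleR_vector_matrix_assoc)
  define V where "V = {w. \<forall>k \<in> N. orthogonal k w}"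
  have "subspace V"
    by (simp add: V_def subspace_orthogonal_to_vectors)
  have "w \<bullet> (F *v w) < 0" if "w \<in> V" and "w \<noteq> 0" and "0 \<le> w \<bullet> (G *v w)" for w
  proof -
    have "orthogonal k w" if "vec_left k = 0" and "vec_right k v* Z = 0" for k
      using \<open>w \<in> V\<close> that by (simp add: V_def N_def)
    then show ?thesis
      using robust_dual_lyapunov_strict_on_complement [OF robust slater _ \<open>w \<noteq> 0\<close>] that(3)
      by (simp add: F G)
  qed
  then obtain t \<beta> where t: "0 \<le> t" "t \<le> 1" "0 < \<beta>"
    and bound: "\<And>z. z \<in> V \<Longrightarrow> (1 - t) * (z \<bullet> (F *v z)) + t * (z \<bullet> (G *v z)) \<le> - \<beta> * (z \<bullet> z)"
    using S_lemma_subspace [OF \<open>subspace V\<close>] by blast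
  have "(1 - t) * (2 * (v \<bullet> (Y *v x))) + t * noise_margin c R Z x v \<le> - \<beta> * (x \<bullet> x)" for x v
  proof -
    have "span N = N"
      using \<open>subspace N\<close> by simp
    obtain k z where k: "k \<in> span N" and z: "\<And>w. w \<in> span N \<Longrightarrow> orthogonal z w"
      and split: "vec_join x v = k + z"
      using orthogonal_subspace_decomp_exists [of N "vec_join x v"] by blast
    have "k \<in> N" "z \<in> V"
      using k z \<open>span N = N\<close> by (simp_all add: V_def orthogonal_commute)
    from \<open>k \<in> N\<close> have kl: "vec_left k = 0" and kZ: "vec_right k v* Z = 0"
      by (simp_all add: N_def)
    have "z = vec_join x v - k"
      using split by simp
    then have x: "vec_left z = x" and v: "vec_right z = v - vec_right k"
      using kl by (simp_all add: vec_eq_iff vec_left_def vec_right_def vec_join_def)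
    have "vec_right k \<bullet> (Y *v x) = 0"
      using robust_dual_lyapunov_kernel [OF robust slater_imp_noise_bounded [OF slater] kZ] .
    then have "(1 - t) * (2 * (v \<bullet> (Y *v x))) + t * noise_margin c R Z x v
        = (1 - t) * (z \<bullet> (F *v z)) + t * (z \<bullet> (G *v z))"
      by (simp add: F G x v noise_margin_def vector_matrix_mult_diff_distrib kZ inner_diff_left)
    also have "\<dots> \<le> - \<beta> * (z \<bullet> z)"
      using bound \<open>z \<in> V\<close> by blast
    also have "\<dots> \<le> - \<beta> * (x \<bullet> x)"
      using t(3) x by (simp add: inner_vec_split [of z])
    finally show ?thesis .
  qed
  with t show ?thesis
    using that by blast
qed

lemma robust_dual_lyapunov_imp_stacked_lmi:
  fixes R :: "real^'l^'n" and Z :: "real^'l^'k" and Y :: "real^'n^'k" and G0 :: "real^'k^'n"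
  assumes robust: "robust_dual_lyapunov c R Z Y"
    and slater: "\<And>u. u \<noteq> 0 \<Longrightarrow> 0 < noise_margin c R Z u (u v* G0)"
  obtains \<alpha> \<beta> where "0 \<le> \<alpha>" and "0 < \<beta>" and "stacked_lmi \<alpha> \<beta> c R Z Y"
proof -
  obtain t \<beta> where t: "0 \<le> t" "t \<le> 1" "0 < \<beta>" and bound:
    "\<And>x v. (1 - t) * (2 * (v \<bullet> (Y *v x))) + t * noise_margin c R Z x v \<le> - \<beta> * (x \<bullet> x)"
    using robust_dual_lyapunov_S_procedure [OF robust slater] by blast
  have "t \<noteq> 1"
  proof
    assume "t = 1"
    define u :: "real^'n" where "u = axis undefined 1"
    have "u \<noteq> 0"
      by (simp add: u_def)
    then have "0 < noise_margin c R Z u (u v* G0)" and "0 < \<beta> * (u \<bullet> u)"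
      using slater t(3) by simp_all
    with bound [where x = u and v = "u v* G0"] \<open>t = 1\<close> show False
      by simp
  qed
  with t have "0 < 1 - t"
    by simp
  have "stacked_lmi (t / (1 - t)) (\<beta> / (1 - t)) c R Z Y"
    unfolding stacked_lmi_def
  proof (intro allI)
    fix x v
    have "(1 - t) * (2 * (v \<bullet> (Y *v x)) + t / (1 - t) * noise_margin c R Z x v)
        = (1 - t) * (2 * (v \<bullet> (Y *v x))) + t * noise_margin c R Z x v"
      and "(1 - t) * (- (\<beta> / (1 - t)) * (x \<bullet> x)) = - \<beta> * (x \<bullet> x)"
      using \<open>0 < 1 - t\<close> by (simp_all add: field_simps)
    then have "(1 - t) * (2 * (v \<bullet> (Y *v x)) + t / (1 - t) * noise_margin c R Z x v)
        \<le> (1 - t) * (- (\<beta> / (1 - t)) * (x \<bullet> x))"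
      using bound [where x = x and v = v] by simp
    then show "2 * (v \<bullet> (Y *v x)) + t / (1 - t) * noise_margin c R Z x v \<le> - (\<beta> / (1 - t)) * (x \<bullet> x)"
      using \<open>0 < 1 - t\<close> by (simp only: mult_le_cancel_left_pos)
  qed
  moreover have "0 \<le> t / (1 - t)" and "0 < \<beta> / (1 - t)"
    using t \<open>0 < 1 - t\<close> by simp_all
  ultimately show ?thesis
    using that by blast
qed

lemma LMI_certifies_gain:
  fixes X :: "real^'l^'n" and U :: "real^'l^'m" and P :: "real^'n^'n" and J :: "real^'n^'m"
  assumes "0 \<le> \<alpha>" and "0 < \<beta>" and P: "transpose P = P" "pd P"
    and "psd (LMI \<alpha> \<beta> P J (Nc c X U V E D11))"
  shows "\<forall>(A, B) \<in> Sigma_set c X U V E D11. nd (transpose (A + B ** (J ** matrix_inv P)) ** matrix_inv P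
    + matrix_inv P ** (A + B ** (J ** matrix_inv P)))"
proof -
  note inv = invertible_matrix_inv [OF pd_invertible [OF P(2)]]
  have "J ** matrix_inv P ** P = J"
    by (simp add: matrix_mul_assoc [symmetric] inv)
  moreover have "robust_dual_lyapunov c (X ** D11 - E ** V) (vblock X U) (vblock P J)"
    using assms by (intro stacked_lmi_imp_robust_dual_lyapunov) (simp_all add: psd_LMI_iff_stacked_lmi)
  ultimately have "robust_dual_lyapunov c (X ** D11 - E ** V) (vblock X U) (vblock P (J ** matrix_inv P ** P))"
    by simp
  then show ?thesis
    by (rule Sigma_set_stabilized_iff [OF matrix_inv_symmetric_pd(1) [OF P] inv, THEN iffD2])
qed

lemma informative_imp_LMI:
  fixes X :: "real^'l^'n" and U :: "real^'l^'m" and Abar :: "real^'n^'n" and Bbar :: "real^'m^'n"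
  assumes slater: "pd (rowIAB Abar Bbar ** Nc c X U V E D11 ** transpose (rowIAB Abar Bbar))"
    and "informative_qs (Sigma_set c X U V E D11)"
  obtains \<alpha> \<beta> and P :: "real^'n^'n" and J :: "real^'n^'m"
  where "0 \<le> \<alpha>" and "0 < \<beta>" and "transpose P = P" and "pd P"
    and "psd (LMI \<alpha> \<beta> P J (Nc c X U V E D11))"
proof -
  let ?R = "X ** D11 - E ** V" and ?Z = "vblock X U"
  obtain K :: "real^'n^'m" and Q :: "real^'n^'n" where Q: "transpose Q = Q" "pd Q"
    and stable: "\<forall>(A, B) \<in> Sigma_set c X U V E D11. nd (transpose (A + B ** K) ** Q + Q ** (A + B ** K))"
    using assms(2) unfolding informative_qs_def by blast
  note inv = invertible_matrix_inv [OF pd_invertible [OF Q(2)]]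
  have "robust_dual_lyapunov c ?R ?Z (vblock (matrix_inv Q) (K ** matrix_inv Q))"
    using stable by (rule Sigma_set_stabilized_iff [OF Q(1) inv(2) inv(1), THEN iffD1])
  moreover have "\<And>u. u \<noteq> 0 \<Longrightarrow> 0 < noise_margin c ?R ?Z u (u v* hblock Abar Bbar)"
    using slater by (simp add: pd_def rowIAB_Nc_quadratic_form)
  ultimately obtain \<alpha> \<beta> where "0 \<le> \<alpha>" "0 < \<beta>"
    "stacked_lmi \<alpha> \<beta> c ?R ?Z (vblock (matrix_inv Q) (K ** matrix_inv Q))"
    by (rule robust_dual_lyapunov_imp_stacked_lmi)
  with matrix_inv_symmetric_pd [OF Q] show ?thesis
    using that by (metis psd_LMI_iff_stacked_lmi)
qed

theorem theorem6:
  fixes c :: real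
    and X :: "real^'l^'n" and U :: "real^'l^'m" and V :: "real^'l^'q"
    and E :: "real^'q^'n" and D11 :: "real^'l^'l"
    and Abar :: "real^'n^'n" and Bbar :: "real^'m^'n"
  assumes "c > 0"
    and "pd (rowIAB Abar Bbar ** Nc c X U V E D11 ** transpose (rowIAB Abar Bbar))"
  shows "(informative_qs (Sigma_set c X U V E D11) \<longleftrightarrow>
           (\<exists>\<alpha> \<beta> (P :: real^'n^'n) (J :: real^'n^'m).
              \<alpha> \<ge> 0 \<and> \<beta> > 0 \<and> transpose P = P \<and> pd P \<and>
              psd (LMI \<alpha> \<beta> P J (Nc c X U V E D11))))
     \<and> (\<forall>\<alpha> \<beta> (P :: real^'n^'n) (J :: real^'n^'m).
           \<alpha> \<ge> 0 \<and> \<beta> > 0 \<and> transpose P = P \<and> pd P \<and>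
           psd (LMI \<alpha> \<beta> P J (Nc c X U V E D11)) \<longrightarrow>
           (\<forall>(A, B) \<in> Sigma_set c X U V E D11.
              nd (transpose (A + B ** (J ** matrix_inv P)) ** matrix_inv P
                  + matrix_inv P ** (A + B ** (J ** matrix_inv P)))))"
proof -
  have "informative_qs (Sigma_set c X U V E D11) \<longleftrightarrow>
      (\<exists>\<alpha> \<beta> (P :: real^'n^'n) (J :: real^'n^'m). \<alpha> \<ge> 0 \<and> \<beta> > 0 \<and> transpose P = P \<and> pd P \<and>
         psd (LMI \<alpha> \<beta> P J (Nc c X U V E D11)))"
  proof
    assume "informative_qs (Sigma_set c X U V E D11)"
    then show "\<exists>\<alpha> \<beta> P J. \<alpha> \<ge> 0 \<and> \<beta> > 0 \<and> transpose P = P \<and> pd P \<and> psd (LMI \<alpha> \<beta> P J (Nc c X U V E D11))"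
      by (elim informative_imp_LMI [OF assms(2)]) blast
  next
    assume "\<exists>\<alpha> \<beta> (P :: real^'n^'n) J. \<alpha> \<ge> 0 \<and> \<beta> > 0 \<and> transpose P = P \<and> pd P \<and>
      psd (LMI \<alpha> \<beta> P J (Nc c X U V E D11))"
    then show "informative_qs (Sigma_set c X U V E D11)"
      unfolding informative_qs_def using LMI_certifies_gain matrix_inv_symmetric_pd by blast
  qed
  then show ?thesis
    using LMI_certifies_gain by blast
qed

end
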